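(* Let $p$ be a prime and $a,b$ positive integers with $b>1$, and suppose $k=\frac{p^{ab}-1}{b(p^a-1)}$ is an integer and $u=b(p^a-1)$ is a primitive divisor of $p^{ab}-1$. Let $\omega$ be a primitive element of $\mathbb{F}_{p^{ab}}$; for $\alpha\in\mathbb{F}_{p^{ab}}$ write $\alpha=\sum_{i=0}^{b-1}c_i\omega^{ik}$ with $c_i\in\mathbb{F}_{p^a}$ and set $[\alpha]_i=c_{i-1}$ for $i=1,\ldots,b$. For an integer $r\ge1$ let $N_r$ be the number of $(x_1,\ldots,x_r)\in(\mathbb{F}_{p^{ab}}^* )^r$ with $x_1^k+\cdots+x_r^k=\alpha$. Then $$N_r=k^{r}\sum_{\substack{r_1+\cdots+r_b=r\\ r_i\ge0}} \frac{r!}{r_{1}!\cdots r_{b}!}\prod_{i=1}^b a_{i}(\alpha),$$ where $$a_{i}(\alpha)=\begin{cases}\frac{p^{a}-1}{p^{a}}\big((p^{a}-1)^{r_i-1}-(-1)^{r_i-1}\big) & \text{if } [\alpha]_i=0,\\[1mm] \frac{1}{p^{a}}\big((p^{a}-1)^{r_i}-(-1)^{r_i}\big) & \text{if } [\alpha]_i\neq 0.\end{cases}$$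
   Context: A divisor $u$ of $p^m-1$ is primitive if $u\nmid p^h-1$ for all $1\le h<m$. Under the hypotheses, $\{1,\omega^k,\ldots,\omega^{(b-1)k}\}$ is a basis of $\mathbb{F}_{p^{ab}}$ over $\mathbb{F}_{p^a}$, so the coordinates $[\alpha]_i$ are well defined. *)

theory Defs
  imports Complex_Main "HOL-Computational_Algebra.Primes" "HOL-Library.Cardinality"
begin

definition primitive_divisor :: "nat \<Rightarrow> nat \<Rightarrow> nat \<Rightarrow> bool" where
  "primitive_divisor u p m \<longleftrightarrow> u dvd p ^ m - 1 \<and> (\<forall>h. 1 \<le> h \<and> h < m \<longrightarrow> \<not> u dvd p ^ h - 1)"

definition primitive_element :: "'a::{finite,field} \<Rightarrow> bool" where
  "primitive_element \<omega> \<longleftrightarrow> \<omega> \<noteq> 0 \<and> (\<forall>x. x \<noteq> 0 \<longrightarrow> (\<exists>n::nat. \<omega> ^ n = x))"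

definition subfield_of_order :: "nat \<Rightarrow> 'a::{finite,field} set" where
  "subfield_of_order q = {x. x ^ q = x}"

definition num_solutions :: "nat \<Rightarrow> nat \<Rightarrow> 'a::{finite,field} \<Rightarrow> nat" where
  "num_solutions r k \<alpha> = card {xs. length xs = r \<and> (\<forall>x\<in>set xs. x \<noteq> 0) \<and>
      sum_list (map (\<lambda>x. x ^ k) xs) = \<alpha>}"

definition a_factor :: "nat \<Rightarrow> nat \<Rightarrow> bool \<Rightarrow> real" where
  "a_factor q ri coord_zero =
     (if coord_zero
      then (real q - 1) / real q * ((real q - 1) powi (int ri - 1) - (-1) powi (int ri - 1))
      else 1 / real q * ((real q - 1) ^ ri - (-1) ^ ri))"

definition compositions :: "nat \<Rightarrow> nat \<Rightarrow> (nat \<Rightarrow> nat) set" where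
  "compositions b r = {rs. (\<forall>i. i \<notin> {1..b} \<longrightarrow> rs i = 0) \<and> (\<Sum>i=1..b. rs i) = r}"

end

(*
  Write q = p^a, G = \<omega>^k and N = p^(ab) - 1 = b (q - 1) k.  Every nonzero k-th power has
  exactly k k-th roots, so N_r = k^r T_r, where T_r counts the ways of writing \<alpha> as an ordered
  sum of r nonzero k-th powers.  The nonzero k-th powers are exactly the products t G^i with
  t in F_q^* and i < b.  Because b (q - 1) is a primitive divisor, the Frobenius conjugates
  G^(q^j), j < b, are pairwise distinct, so no nonzero polynomial of degree < b over F_q vanishes
  at G: the powers 1, G, ..., G^(b-1) are independent over F_q.  Hence a sum of r such products
  equals \<alpha> exactly when, for each i, the summands lying on G^(i-1) add up to [\<alpha>]_i.
  Counting these distributions gives the multinomial sum, and the number of ordered sums of n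
  nonzero elements of F_q equal to c satisfies a linear recursion in n solved by a_factor.
*)

theory Submission
  imports Defs "HOL-Number_Theory.Residues" "HOL-Computational_Algebra.Polynomial"
begin

section \<open>Counting ordered sums\<close>

lemma card_lists_sum_map_0:
  "card {xs. length xs = 0 \<and> set xs \<subseteq> A \<and> sum_list (map f xs) = s} = (if s = 0 then 1 else 0)"
proof -
  have "{xs. length xs = 0 \<and> set xs \<subseteq> A \<and> sum_list (map f xs) = s} = (if s = 0 then {[]} else {})"
    by auto
  then show ?thesis by simp
qed

lemma card_lists_sum_map_Suc:
  fixes f :: "'a \<Rightarrow> 'b::ab_group_add"
  assumes "finite A"
  shows "card {xs. length xs = Suc n \<and> set xs \<subseteq> A \<and> sum_list (map f xs) = s} =
    (\<Sum>x\<in>A. card {xs. length xs = n \<and> set xs \<subseteq> A \<and> sum_list (map f xs) = s - f x})"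
proof -
  let ?L = "\<lambda>s. {xs. length xs = n \<and> set xs \<subseteq> A \<and> sum_list (map f xs) = s}"
  have split: "{xs. length xs = Suc n \<and> set xs \<subseteq> A \<and> sum_list (map f xs) = s} =
      (\<Union>x\<in>A. (#) x ` ?L (s - f x))"
    by (auto simp: length_Suc_conv algebra_simps)
  have "finite (?L t)" for t
    using finite_lists_length_eq[OF assms, of n] by (rule rev_finite_subset) auto
  then show ?thesis
    unfolding split using assms by (subst card_UN_disjoint) (auto simp: card_image)
qed

definition sum_reps :: "'a::ab_group_add set \<Rightarrow> nat \<Rightarrow> 'a \<Rightarrow> nat" where
  "sum_reps A n s = card {xs. length xs = n \<and> set xs \<subseteq> A \<and> sum_list xs = s}"

lemma sum_reps_0: "sum_reps A 0 s = (if s = 0 then 1 else 0)"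
  using card_lists_sum_map_0[where f="\<lambda>x. x"] by (simp only: sum_reps_def map_ident)

lemma sum_reps_Suc: "finite A \<Longrightarrow> sum_reps A (Suc n) s = (\<Sum>x\<in>A. sum_reps A n (s - x))"
  using card_lists_sum_map_Suc[where f="\<lambda>x. x"] by (simp only: sum_reps_def map_ident)

lemma card_lists_sum_map_uniform_fibres:
  fixes f :: "'a \<Rightarrow> 'b::ab_group_add"
  assumes "finite A" and fibres: "\<And>y. y \<in> f ` A \<Longrightarrow> card {x \<in> A. f x = y} = m"
  shows "card {xs. length xs = n \<and> set xs \<subseteq> A \<and> sum_list (map f xs) = s} = m ^ n * sum_reps (f ` A) n s"
proof (induction n arbitrary: s)
  case 0
  then show ?case unfolding card_lists_sum_map_0 sum_reps_0 by simp
next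
  case (Suc n)
  have "card {xs. length xs = Suc n \<and> set xs \<subseteq> A \<and> sum_list (map f xs) = s} =
      (\<Sum>x\<in>A. m ^ n * sum_reps (f ` A) n (s - f x))"
    by (simp add: card_lists_sum_map_Suc[OF \<open>finite A\<close>] Suc.IH)
  also have "\<dots> = (\<Sum>y\<in>f ` A. \<Sum>x\<in>{x \<in> A. f x = y}. m ^ n * sum_reps (f ` A) n (s - y))"
    using \<open>finite A\<close> by (subst sum.image_gen) (auto intro!: sum.cong)
  also have "\<dots> = (\<Sum>y\<in>f ` A. m * (m ^ n * sum_reps (f ` A) n (s - y)))"
    by (simp add: fibres)
  also have "\<dots> = m ^ Suc n * sum_reps (f ` A) (Suc n) s"
    using \<open>finite A\<close> by (simp add: sum_reps_Suc sum_distrib_left mult_ac)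
  finally show ?case .
qed

section \<open>Compositions and multinomial coefficients\<close>

lemma finite_compositions: "finite (compositions b r)"
proof (rule finite_subset)
  show "compositions b r \<subseteq> {rs. \<forall>i. (i \<in> {1..b} \<longrightarrow> rs i \<in> {..r}) \<and> (i \<notin> {1..b} \<longrightarrow> rs i = 0)}"
    unfolding compositions_def using member_le_sum[of _ "{1..b}"] by fastforce
qed (rule finite_set_of_finite_funs; simp)

lemma compositions_0: "compositions b 0 = {\<lambda>_. 0}"
  unfolding compositions_def by (auto simp: fun_eq_iff) (metis atLeastAtMost_iff)

lemma bij_betw_compositions_Suc:
  assumes "i \<in> {1..b}"
  shows "bij_betw (\<lambda>rs. rs(i := Suc (rs i))) (compositions b r) {rs \<in> compositions b (Suc r). 0 < rs i}"
proof (rule bij_betw_byWitness[where f' = "\<lambda>rs. rs(i := rs i - 1)"])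
  have "(\<Sum>j=1..b. (rs(i := x)) j) = x + (\<Sum>j\<in>{1..b}-{i}. rs j)" for rs :: "nat \<Rightarrow> nat" and x
    using assms by (simp add: sum.remove)
  moreover have "(\<Sum>j=1..b. rs j) = rs i + (\<Sum>j\<in>{1..b}-{i}. rs j)" for rs :: "nat \<Rightarrow> nat"
    using assms by (simp add: sum.remove)
  ultimately show "(\<lambda>rs. rs(i := Suc (rs i))) ` compositions b r \<subseteq> {rs \<in> compositions b (Suc r). 0 < rs i}"
    and "(\<lambda>rs. rs(i := rs i - 1)) ` {rs \<in> compositions b (Suc r). 0 < rs i} \<subseteq> compositions b r"
    using assms by (auto simp: compositions_def)
qed auto

definition multinomial_coeff :: "nat \<Rightarrow> nat \<Rightarrow> (nat \<Rightarrow> nat) \<Rightarrow> real" where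
  "multinomial_coeff b r rs = real (fact r) / (\<Prod>i=1..b. real (fact (rs i)))"

lemma multinomial_coeff_Suc:
  assumes "rs \<in> compositions b (Suc r)"
  shows "multinomial_coeff b (Suc r) rs = (\<Sum>i=1..b. real (rs i) * multinomial_coeff b r rs)"
proof -
  have "multinomial_coeff b (Suc r) rs = real (Suc r) * multinomial_coeff b r rs"
    by (simp add: multinomial_coeff_def algebra_simps)
  also have "real (Suc r) = (\<Sum>i=1..b. real (rs i))"
    using assms unfolding compositions_def by (simp flip: of_nat_sum)
  finally show ?thesis
    by (simp add: sum_distrib_right)
qed

lemma multinomial_coeff_upd_Suc:
  assumes "i \<in> {1..b}"
  shows "real (Suc (rs i)) * multinomial_coeff b r (rs(i := Suc (rs i))) = multinomial_coeff b r rs"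
proof -
  define Q where "Q = (\<Prod>j\<in>{1..b}-{i}. real (fact (rs j)))"
  have prod_upd: "(\<Prod>j=1..b. real (fact ((rs(i := x)) j))) = real (fact x) * Q" for x
    using assms by (simp add: prod.remove Q_def)
  have "multinomial_coeff b r (rs(i := Suc (rs i))) =
      real (fact r) / (real (Suc (rs i)) * (real (fact (rs i)) * Q))"
    unfolding multinomial_coeff_def prod_upd by (simp add: algebra_simps)
  then have "real (Suc (rs i)) * multinomial_coeff b r (rs(i := Suc (rs i))) =
      real (Suc (rs i)) * real (fact r) / (real (Suc (rs i)) * (real (fact (rs i)) * Q))"
    by simp
  also have "\<dots> = real (fact r) / (real (fact (rs i)) * Q)"
    by (rule mult_divide_mult_cancel_left) simp
  also have "\<dots> = multinomial_coeff b r rs"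
    using prod_upd[of "rs i"] by (simp add: multinomial_coeff_def)
  finally show ?thesis .
qed

lemma sum_compositions_Suc:
  fixes F :: "(nat \<Rightarrow> nat) \<Rightarrow> real"
  shows "(\<Sum>rs\<in>compositions b (Suc r). multinomial_coeff b (Suc r) rs * F rs) =
    (\<Sum>i=1..b. \<Sum>rs\<in>compositions b r. multinomial_coeff b r rs * F (rs(i := Suc (rs i))))"
proof -
  have "(\<Sum>rs\<in>compositions b (Suc r). multinomial_coeff b (Suc r) rs * F rs) =
      (\<Sum>rs\<in>compositions b (Suc r). \<Sum>i=1..b. real (rs i) * multinomial_coeff b r rs * F rs)"
    by (simp add: multinomial_coeff_Suc sum_distrib_right)
  also have "\<dots> = (\<Sum>i=1..b. \<Sum>rs\<in>compositions b (Suc r). real (rs i) * multinomial_coeff b r rs * F rs)"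
    by (rule sum.swap)
  also have "\<dots> = (\<Sum>i=1..b. \<Sum>rs\<in>{rs \<in> compositions b (Suc r). 0 < rs i}. real (rs i) * multinomial_coeff b r rs * F rs)"
    by (intro sum.cong refl sum.mono_neutral_right) (auto simp: finite_compositions)
  also have "\<dots> = (\<Sum>i=1..b. \<Sum>rs\<in>compositions b r. multinomial_coeff b r rs * F (rs(i := Suc (rs i))))"
  proof (rule sum.cong[OF refl])
    fix i assume i: "i \<in> {1..b}"
    show "(\<Sum>rs\<in>{rs \<in> compositions b (Suc r). 0 < rs i}. real (rs i) * multinomial_coeff b r rs * F rs) =
        (\<Sum>rs\<in>compositions b r. multinomial_coeff b r rs * F (rs(i := Suc (rs i))))"
      by (simp add: sum.reindex_bij_betw[OF bij_betw_compositions_Suc[OF i], symmetric]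
          multinomial_coeff_upd_Suc[OF i, simplified])
  qed
  finally show ?thesis .
qed

section \<open>Ordered sums of nonzero elements\<close>

lemma a_factor_True_0: "q \<ge> 2 \<Longrightarrow> a_factor q 0 True = 1"
  by (simp add: a_factor_def field_simps)

lemma a_factor_False_0: "a_factor q 0 False = 0"
  by (simp add: a_factor_def)

lemma a_factor_True_Suc: "a_factor q (Suc n) True = (real q - 1) * a_factor q n False"
  by (simp add: a_factor_def power_int_of_nat)

lemma a_factor_False_Suc:
  assumes "q \<ge> 2"
  shows "a_factor q (Suc n) False = a_factor q n True + (real q - 2) * a_factor q n False"
proof (cases n)
  case 0
  then show ?thesis using assms by (simp add: a_factor_True_0 a_factor_False_0, simp add: a_factor_def)
next
  case (Suc m)
  then show ?thesis using assms
    by (simp add: a_factor_True_Suc a_factor_def field_simps)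
qed

lemma sum_reps_nonzero_subgroup:
  fixes K :: "'a::ab_group_add set"
  assumes "finite K" "0 \<in> K" and diff_closed: "\<And>x y. x \<in> K \<Longrightarrow> y \<in> K \<Longrightarrow> x - y \<in> K"
    and "card K \<ge> 2" and "c \<in> K"
  shows "real (sum_reps (K - {0}) n c) = a_factor (card K) n (c = 0)"
  using \<open>c \<in> K\<close>
proof (induction n arbitrary: c)
  case 0
  then show ?case using assms by (simp add: sum_reps_0 a_factor_True_0 a_factor_False_0)
next
  case (Suc n)
  have card_nonzero: "real (card (K - {0})) = real (card K) - 1"
    using assms by (simp add: of_nat_diff)
  have "real (sum_reps (K - {0}) (Suc n) c) = (\<Sum>t\<in>K - {0}. a_factor (card K) n (c = t))"
    using Suc assms by (simp add: sum_reps_Suc)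
  also have "\<dots> = a_factor (card K) (Suc n) (c = 0)"
  proof (cases "c = 0")
    case True
    then show ?thesis
      using card_nonzero by (simp add: a_factor_True_Suc)
  next
    case False
    have "(\<Sum>t\<in>K - {0}. a_factor (card K) n (c = t)) =
        a_factor (card K) n True + (\<Sum>t\<in>K - {0} - {c}. a_factor (card K) n (c = t))"
      using False Suc.prems assms by (simp add: sum.remove[of _ c])
    also have "(\<Sum>t\<in>K - {0} - {c}. a_factor (card K) n (c = t)) =
        (\<Sum>t\<in>K - {0} - {c}. a_factor (card K) n False)"
      by (intro sum.cong) auto
    also have "\<dots> = (real (card K) - 2) * a_factor (card K) n False"
      using False Suc.prems assms by (simp add: of_nat_diff)
    finally show ?thesis
      using False assms by (simp add: a_factor_False_Suc)
  qed
  finally show ?case .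
qed

section \<open>Ordered sums in a direct sum\<close>

definition basis_multiples :: "'a::field set \<Rightarrow> (nat \<Rightarrow> 'a) \<Rightarrow> nat \<Rightarrow> 'a set" where
  "basis_multiples K v b = (\<lambda>(t, i). t * v i) ` ((K - {0}) \<times> {1..b})"

lemma inj_on_basis_multiples:
  fixes K :: "'a::field set" and v :: "nat \<Rightarrow> 'a"
  assumes "0 \<in> K" and diff_closed: "\<And>x y. x \<in> K \<Longrightarrow> y \<in> K \<Longrightarrow> x - y \<in> K"
    and indep: "\<And>d. \<forall>i\<in>{1..b}. d i \<in> K \<Longrightarrow> (\<Sum>i=1..b. d i * v i) = 0 \<Longrightarrow> \<forall>i\<in>{1..b}. d i = 0"
  shows "inj_on (\<lambda>(t, i). t * v i) ((K - {0}) \<times> {1..b})"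
proof (rule inj_onI)
  fix x y
  assume "x \<in> (K - {0}) \<times> {1..b}" "y \<in> (K - {0}) \<times> {1..b}"
    and eq_xy: "(\<lambda>(t, i). t * v i) x = (\<lambda>(t, i). t * v i) y"
  obtain t i t' i' where xy: "x = (t, i)" "y = (t', i')"
    by (cases x, cases y)
  with \<open>x \<in> _\<close> \<open>y \<in> _\<close> have t: "t \<in> K" "t \<noteq> 0" "t' \<in> K" "t' \<noteq> 0" and i: "i \<in> {1..b}" "i' \<in> {1..b}"
    by auto
  from eq_xy have eq: "t * v i = t' * v i'"
    by (simp add: xy)
  define d where "d j = (if j = i then t else 0) - (if j = i' then t' else 0)" for j
  have "(\<Sum>j=1..b. d j * v j) = t * v i - t' * v i'"
    using i by (simp add: d_def left_diff_distrib sum_subtractf if_distrib[of "\<lambda>x. x * _"] cong: if_cong)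
  also have "\<dots> = 0"
    using eq by simp
  finally have "(\<Sum>j=1..b. d j * v j) = 0" .
  moreover have "\<forall>j\<in>{1..b}. d j \<in> K"
    using t \<open>0 \<in> K\<close> diff_closed[of 0 t'] by (auto simp: d_def intro: diff_closed)
  ultimately have "d i = 0"
    using indep i by blast
  then show "x = y"
    using t by (cases "i = i'") (simp_all add: d_def xy)
qed

lemma sum_prod_sum_reps_upd:
  assumes "finite A" "finite I" "i \<in> I"
  shows "(\<Sum>t\<in>A. \<Prod>j\<in>I. real (sum_reps A (rs j) ((e(i := e i - t)) j))) =
    (\<Prod>j\<in>I. real (sum_reps A ((rs(i := Suc (rs i))) j) (e j)))"
proof -
  have other_coords: "(\<Prod>j\<in>I - {i}. real (sum_reps A (rs' j) ((e(i := x)) j))) =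
      (\<Prod>j\<in>I - {i}. real (sum_reps A (rs j) (e j)))" if "rs' = rs(i := y)" for rs' x y
    using that by (intro prod.cong) auto
  have "(\<Sum>t\<in>A. \<Prod>j\<in>I. real (sum_reps A (rs j) ((e(i := e i - t)) j))) =
      (\<Sum>t\<in>A. real (sum_reps A (rs i) (e i - t))) * (\<Prod>j\<in>I - {i}. real (sum_reps A (rs j) (e j)))"
    using other_coords[of rs "rs i"] by (simp add: prod.remove[OF assms(2,3)] sum_distrib_right)
  also have "\<dots> = (\<Prod>j\<in>I. real (sum_reps A ((rs(i := Suc (rs i))) j) (e j)))"
    using other_coords[of _ "Suc (rs i)" "e i"] assms(1)
    by (simp add: prod.remove[OF assms(2,3)] sum_reps_Suc)
  finally show ?thesis .
qed

lemma sum_reps_Suc_basis_multiples: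
  fixes K :: "'a::field set" and v :: "nat \<Rightarrow> 'a"
  assumes "finite K" "0 \<in> K" and diff_closed: "\<And>x y. x \<in> K \<Longrightarrow> y \<in> K \<Longrightarrow> x - y \<in> K"
    and indep: "\<And>d. \<forall>i\<in>{1..b}. d i \<in> K \<Longrightarrow> (\<Sum>i=1..b. d i * v i) = 0 \<Longrightarrow> \<forall>i\<in>{1..b}. d i = 0"
  shows "real (sum_reps (basis_multiples K v b) (Suc r) s) =
    (\<Sum>i=1..b. \<Sum>t\<in>K - {0}. real (sum_reps (basis_multiples K v b) r (s - t * v i)))"
proof -
  have "real (sum_reps (basis_multiples K v b) (Suc r) s) =
      (\<Sum>(t, i)\<in>(K - {0}) \<times> {1..b}. real (sum_reps (basis_multiples K v b) r (s - t * v i)))"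
    using \<open>finite K\<close> sum.reindex[OF inj_on_basis_multiples[OF \<open>0 \<in> K\<close> diff_closed indep]]
    by (simp add: basis_multiples_def sum_reps_Suc case_prod_unfold)
  also have "\<dots> = (\<Sum>t\<in>K - {0}. \<Sum>i=1..b. real (sum_reps (basis_multiples K v b) r (s - t * v i)))"
    by (rule sum.cartesian_product[symmetric])
  also have "\<dots> = (\<Sum>i=1..b. \<Sum>t\<in>K - {0}. real (sum_reps (basis_multiples K v b) r (s - t * v i)))"
    by (rule sum.swap)
  finally show ?thesis .
qed

lemma sum_reps_basis_multiples:
  fixes K :: "'a::field set" and v :: "nat \<Rightarrow> 'a"
  assumes "finite K" "0 \<in> K" and diff_closed: "\<And>x y. x \<in> K \<Longrightarrow> y \<in> K \<Longrightarrow> x - y \<in> K"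
    and indep: "\<And>d. \<forall>i\<in>{1..b}. d i \<in> K \<Longrightarrow> (\<Sum>i=1..b. d i * v i) = 0 \<Longrightarrow> \<forall>i\<in>{1..b}. d i = 0"
    and "\<forall>i\<in>{1..b}. e i \<in> K"
  shows "real (sum_reps (basis_multiples K v b) r (\<Sum>i=1..b. e i * v i)) =
    (\<Sum>rs\<in>compositions b r. multinomial_coeff b r rs * (\<Prod>i=1..b. real (sum_reps (K - {0}) (rs i) (e i))))"
  using \<open>\<forall>i\<in>{1..b}. e i \<in> K\<close>
proof (induction r arbitrary: e)
  case 0
  have "(\<Sum>i=1..b. e i * v i) = 0 \<longleftrightarrow> (\<forall>i\<in>{1..b}. e i = 0)"
    using indep[of e] 0 by auto
  then show ?case
    by (simp add: sum_reps_0 compositions_0 multinomial_coeff_def)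
next
  case (Suc r)
  let ?S = "\<lambda>rs e. \<Prod>j=1..b. real (sum_reps (K - {0}) (rs j) (e j))"
  have "real (sum_reps (basis_multiples K v b) (Suc r) (\<Sum>j=1..b. e j * v j)) =
      (\<Sum>i=1..b. \<Sum>t\<in>K - {0}. real (sum_reps (basis_multiples K v b) r ((\<Sum>j=1..b. e j * v j) - t * v i)))"
    by (rule sum_reps_Suc_basis_multiples[OF assms(1-4)])
  also have "\<dots> = (\<Sum>i=1..b. \<Sum>t\<in>K - {0}.
      \<Sum>rs\<in>compositions b r. multinomial_coeff b r rs * ?S rs (e(i := e i - t)))"
  proof (intro sum.cong refl)
    fix i t assume i: "i \<in> {1..b}" and t: "t \<in> K - {0}"
    have "(\<Sum>j=1..b. e j * v j) - t * v i = (\<Sum>j=1..b. (e(i := e i - t)) j * v j)"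
      using i by (simp add: sum.remove algebra_simps)
    moreover have "\<forall>j\<in>{1..b}. (e(i := e i - t)) j \<in> K"
      using i t Suc.prems diff_closed by auto
    ultimately show "real (sum_reps (basis_multiples K v b) r ((\<Sum>j=1..b. e j * v j) - t * v i)) =
        (\<Sum>rs\<in>compositions b r. multinomial_coeff b r rs * ?S rs (e(i := e i - t)))"
      by (simp only: Suc.IH)
  qed
  also have "\<dots> = (\<Sum>i=1..b. \<Sum>rs\<in>compositions b r.
      multinomial_coeff b r rs * (\<Sum>t\<in>K - {0}. ?S rs (e(i := e i - t))))"
    by (intro sum.cong refl) (simp add: sum_distrib_left sum.swap[of _ "K - {0}"])
  also have "\<dots> = (\<Sum>i=1..b. \<Sum>rs\<in>compositions b r. multinomial_coeff b r rs * ?S (rs(i := Suc (rs i))) e)"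
    using \<open>finite K\<close> sum_prod_sum_reps_upd[of "K - {0}" "{1..b}"] by (intro sum.cong refl) simp
  also have "\<dots> = (\<Sum>rs\<in>compositions b (Suc r). multinomial_coeff b (Suc r) rs * ?S rs e)"
    by (rule sum_compositions_Suc[symmetric])
  finally show ?case .
qed

section \<open>Finite fields with a primitive element\<close>

lemma card_field_ge_2: "CARD('a::{finite,field}) \<ge> 2"
  using card_mono[of "UNIV :: 'a set" "{0, 1}"] by simp

lemma nonzero_power_card_minus_one:
  fixes x :: "'a::{finite,field}"
  assumes "x \<noteq> 0"
  shows "x ^ (CARD('a) - 1) = 1"
proof -
  have "(\<Prod>y\<in>UNIV - {0}. y) = (\<Prod>y\<in>UNIV - {0}. x * y)"
    using assms by (intro prod.reindex_bij_witness[of _ "\<lambda>y. x * y" "\<lambda>y. y / x"]) auto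
  also have "\<dots> = x ^ (CARD('a) - 1) * (\<Prod>y\<in>UNIV - {0}. y)"
    by (simp add: prod.distrib card_Diff_singleton)
  finally show ?thesis
    by simp
qed

lemma primitive_element_power_eq_iff:
  fixes \<omega> :: "'a::{finite,field}"
  assumes "primitive_element \<omega>"
  shows "\<omega> ^ m = \<omega> ^ n \<longleftrightarrow> m mod (CARD('a) - 1) = n mod (CARD('a) - 1)"
proof -
  let ?N = "CARD('a) - 1"
  have "\<omega> ^ ?N = 1"
    using assms unfolding primitive_element_def by (blast intro: nonzero_power_card_minus_one)
  have reduce: "\<omega> ^ n = \<omega> ^ (n mod ?N)" for n
  proof -
    have "\<omega> ^ n = (\<omega> ^ ?N) ^ (n div ?N) * \<omega> ^ (n mod ?N)"
      by (simp flip: power_mult power_add)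
    with \<open>\<omega> ^ ?N = 1\<close> show ?thesis
      by simp
  qed
  have "(\<lambda>j. \<omega> ^ j) ` {..<?N} = UNIV - {0}"
  proof
    show "UNIV - {0} \<subseteq> (\<lambda>j. \<omega> ^ j) ` {..<?N}"
    proof
      fix x :: 'a assume "x \<in> UNIV - {0}"
      then obtain n where "x = \<omega> ^ n"
        using assms by (auto simp: primitive_element_def)
      then show "x \<in> (\<lambda>j. \<omega> ^ j) ` {..<?N}"
        using card_field_ge_2[where 'a = 'a] by (auto simp: reduce[of n])
    qed
  qed (use assms in \<open>auto simp: primitive_element_def\<close>)
  then have "inj_on (\<lambda>j. \<omega> ^ j) {..<?N}"
    by (intro eq_card_imp_inj_on) (simp_all add: card_Diff_singleton)
  moreover have "m mod ?N < ?N" "n mod ?N < ?N"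
    using card_field_ge_2[where 'a = 'a] by simp_all
  ultimately show ?thesis
    by (subst (1 2) reduce) (auto dest: inj_onD)
qed

lemma primitive_element_power_eq_1_iff:
  fixes \<omega> :: "'a::{finite,field}"
  assumes "primitive_element \<omega>"
  shows "\<omega> ^ n = 1 \<longleftrightarrow> CARD('a) - 1 dvd n"
  using primitive_element_power_eq_iff[OF assms, of n 0] by (simp add: dvd_eq_mod_eq_0)

lemma card_roots_of_unity:
  fixes \<omega> :: "'a::{finite,field}"
  assumes "primitive_element \<omega>" and "e dvd CARD('a) - 1"
  shows "card {x :: 'a. x ^ e = 1} = e"
proof -
  let ?N = "CARD('a) - 1"
  obtain d where N: "?N = d * e"
    using assms(2) by (metis dvd_def mult.commute)
  then have "d > 0" "e > 0"
    using card_field_ge_2[where 'a = 'a] by (auto intro: gr0I)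
  have "{x :: 'a. x ^ e = 1} = (\<lambda>m. \<omega> ^ (d * m)) ` {..<e}"
  proof (intro equalityI subsetI)
    fix x :: 'a assume "x \<in> {x. x ^ e = 1}"
    then have "x \<noteq> 0" "x ^ e = 1"
      using \<open>e > 0\<close> by (auto simp: power_0_left)
    then obtain n where n: "x = \<omega> ^ n"
      using assms(1) by (auto simp: primitive_element_def)
    with \<open>x ^ e = 1\<close> have "\<omega> ^ (n * e) = 1"
      by (simp add: power_mult)
    then have "d * e dvd n * e"
      unfolding primitive_element_power_eq_1_iff[OF assms(1)] N .
    then obtain m where "n = d * m"
      using \<open>e > 0\<close> by (auto elim: dvdE)
    moreover have "\<omega> ^ (d * m) = \<omega> ^ (d * (m mod e))"
      unfolding primitive_element_power_eq_iff[OF assms(1)] N by (simp add: mod_mult_mult1)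
    ultimately show "x \<in> (\<lambda>m. \<omega> ^ (d * m)) ` {..<e}"
      using \<open>e > 0\<close> n by auto
  next
    fix x assume "x \<in> (\<lambda>m. \<omega> ^ (d * m)) ` {..<e}"
    then show "x \<in> {x. x ^ e = 1}"
      using primitive_element_power_eq_1_iff[OF assms(1), of "d * _ * e"] unfolding N
      by (auto simp flip: power_mult)
  qed
  moreover have "inj_on (\<lambda>m. \<omega> ^ (d * m)) {..<e}"
    unfolding inj_on_def primitive_element_power_eq_iff[OF assms(1)] N
    using \<open>d > 0\<close> by (simp add: mod_mult_mult1)
  ultimately show ?thesis
    by (simp add: card_image)
qed

lemma card_power_fibre:
  fixes \<omega> y :: "'a::{finite,field}"
  assumes "primitive_element \<omega>" and "k dvd CARD('a) - 1" and "y \<noteq> 0"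
  shows "card {x \<in> UNIV - {0}. x ^ k = y ^ k} = k"
proof -
  have "k > 0"
    using assms(2) card_field_ge_2[where 'a = 'a] by (auto intro: gr0I)
  have "{x \<in> UNIV - {0}. x ^ k = y ^ k} = (\<lambda>z. y * z) ` {z. z ^ k = 1}"
  proof (intro equalityI subsetI)
    fix x assume "x \<in> {x \<in> UNIV - {0}. x ^ k = y ^ k}"
    then show "x \<in> (\<lambda>z. y * z) ` {z. z ^ k = 1}"
      using \<open>y \<noteq> 0\<close> by (intro image_eqI[of _ _ "x / y"]) (auto simp: power_divide)
  qed (use \<open>y \<noteq> 0\<close> \<open>k > 0\<close> in \<open>auto simp: power_mult_distrib power_0_left\<close>)
  moreover have "inj_on (\<lambda>z. y * z) {z. z ^ k = 1}"
    using \<open>y \<noteq> 0\<close> by (auto intro: inj_onI)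
  ultimately show ?thesis
    using card_roots_of_unity[OF assms(1,2)] by (simp add: card_image)
qed

lemma CHAR_eq_prime:
  assumes "prime p" and "CARD('a::{finite,field}) = p ^ n"
  shows "CHAR('a) = p"
proof -
  have "prime CHAR('a)"
    by (simp add: finite_imp_CHAR_pos prime_CHAR_semidom)
  moreover have "CHAR('a) dvd p ^ n"
    using CHAR_dvd_CARD[where 'a = 'a] assms(2) by simp
  ultimately have "CHAR('a) dvd p"
    using prime_dvd_power by blast
  then show ?thesis
    using \<open>prime CHAR('a)\<close> assms(1) primes_dvd_imp_eq by blast
qed

lemma power_power_eq_self:
  fixes d :: "'a::monoid_mult"
  assumes "d ^ Q = d"
  shows "d ^ (Q ^ j) = d"
proof (induction j)
  case (Suc j)
  then show ?case
    using assms by (simp add: power_Suc2 power_mult)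
qed simp

lemma powers_independent_over_frobenius_fixed:
  fixes \<theta> :: "'a::field" and d :: "nat \<Rightarrow> 'a"
  assumes "prime CHAR('a)" and "Q = CHAR('a) ^ s"
    and orbit: "inj_on (\<lambda>j. \<theta> ^ (Q ^ j)) {..<b}"
    and fixed: "\<forall>i<b. d i ^ Q = d i"
    and sum_zero: "(\<Sum>i<b. d i * \<theta> ^ i) = 0"
  shows "\<forall>i<b. d i = 0"
proof (rule ccontr)
  define P where "P = (\<Sum>i<b. monom (d i) i)"
  have coeff_P: "coeff P i = (if i < b then d i else 0)" for i
    by (simp add: P_def coeff_sum)
  assume "\<not> (\<forall>i<b. d i = 0)"
  then obtain i where "i < b" "coeff P i \<noteq> 0"
    by (auto simp: coeff_P)
  then have "P \<noteq> 0" "b > 0"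
    by auto
  have "degree P < b"
  proof -
    have "degree P \<le> b - 1"
      by (rule degree_le) (auto simp: coeff_P)
    with \<open>b > 0\<close> show ?thesis
      by linarith
  qed
  have "poly P (\<theta> ^ (Q ^ j)) = 0" for j
  proof -
    have "poly P (\<theta> ^ (Q ^ j)) = (\<Sum>i<b. (d i * \<theta> ^ i) ^ (Q ^ j))"
      using fixed power_power_eq_self[of "d _" Q j]
      by (simp add: P_def poly_sum poly_monom power_mult_distrib mult.commute[of _ "Q ^ j"]
          flip: power_mult)
    also have "\<dots> = (\<Sum>i<b. d i * \<theta> ^ i) ^ (Q ^ j)"
      using assms(1,2) by (simp add: freshmans_dream_sum'[where n = "s * j"] power_mult)
    also have "\<dots> = 0"
      using sum_zero assms(1,2) by (simp add: power_0_left prime_gt_0_nat)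
    finally show ?thesis .
  qed
  then have "(\<lambda>j. \<theta> ^ (Q ^ j)) ` {..<b} \<subseteq> {x. poly P x = 0}"
    by auto
  then have "card ((\<lambda>j. \<theta> ^ (Q ^ j)) ` {..<b}) \<le> degree P"
    using card_mono[OF poly_roots_finite[OF \<open>P \<noteq> 0\<close>]] card_poly_roots_bound[OF \<open>P \<noteq> 0\<close>]
    by (meson le_trans)
  with \<open>degree P < b\<close> show False
    by (simp add: card_image[OF orbit])
qed

lemma inj_on_frobenius_orbit:
  fixes \<omega> :: "'a::{finite,field}"
  assumes "primitive_element \<omega>" and "CARD('a) - 1 = u * k" and "Q > 0" and "coprime u Q"
    and no_smaller_order: "\<forall>h. 1 \<le> h \<and> h < b \<longrightarrow> \<not> u dvd Q ^ h - 1"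
  shows "inj_on (\<lambda>j. (\<omega> ^ k) ^ (Q ^ j)) {..<b}"
proof (rule linorder_inj_onI', rule notI)
  fix j l assume "j \<in> {..<b}" "l \<in> {..<b}" "j < l" and "(\<omega> ^ k) ^ (Q ^ j) = (\<omega> ^ k) ^ (Q ^ l)"
  then have "\<omega> ^ (k * Q ^ j) = \<omega> ^ (k * Q ^ l)"
    by (simp flip: power_mult)
  then have "(k * Q ^ j) mod (u * k) = (k * Q ^ l) mod (u * k)"
    unfolding primitive_element_power_eq_iff[OF assms(1)] assms(2) .
  then have "k * (Q ^ j mod u) = k * (Q ^ l mod u)"
    by (simp only: mult.commute[of u] mod_mult_mult1)
  moreover have "k > 0"
    using assms(2) card_field_ge_2[where 'a = 'a] by (auto intro: gr0I)
  ultimately have "Q ^ j mod u = Q ^ l mod u"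
    by simp
  moreover have "Q ^ j \<le> Q ^ l"
    using \<open>j < l\<close> \<open>Q > 0\<close> by (simp add: power_increasing)
  ultimately have "u dvd Q ^ l - Q ^ j"
    by (metis mod_eq_dvd_iff_nat)
  also have "Q ^ l - Q ^ j = Q ^ j * (Q ^ (l - j) - 1)"
    using \<open>j < l\<close> by (simp add: diff_mult_distrib2 flip: power_add)
  finally have "u dvd Q ^ (l - j) - 1"
    using \<open>coprime u Q\<close> by (simp add: coprime_dvd_mult_right_iff)
  moreover have "1 \<le> l - j" "l - j < b"
    using \<open>j < l\<close> \<open>l \<in> {..<b}\<close> by auto
  ultimately show False
    using no_smaller_order by blast
qed

section \<open>Fields of order p^(ab) with primitive divisor b(p^a - 1)\<close>

locale primitive_divisor_field =
  fixes p a b :: nat and \<omega> :: "'f::{finite,field}"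
  assumes prime: "prime p" and a_pos: "a > 0" and b_pos: "b > 0"
    and card_field: "CARD('f) = p ^ (a * b)"
    and primitive_u: "primitive_divisor (b * (p ^ a - 1)) p (a * b)"
    and primitive: "primitive_element \<omega>"
begin

abbreviation "q \<equiv> p ^ a"
abbreviation "k \<equiv> (p ^ (a * b) - 1) div (b * (p ^ a - 1))"
abbreviation "K \<equiv> subfield_of_order q :: 'f set"
abbreviation "G \<equiv> \<omega> ^ k"

lemma q_ge_2: "q \<ge> 2"
  using prime_ge_2_nat[OF prime] power_increasing[of 1 a p] a_pos by simp

lemma card_minus_one: "CARD('f) - 1 = b * (q - 1) * k"
  using primitive_u card_field by (simp add: primitive_divisor_def)

lemma CHAR_field: "CHAR('f) = p"
  using CHAR_eq_prime[OF prime card_field] .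

lemma subfield_nonzero: "K - {0} = {x. x ^ (q - 1) = 1}"
proof -
  have "q = Suc (q - 1)"
    using q_ge_2 by simp
  then have "x ^ q = x * x ^ (q - 1)" for x :: 'f
    by (metis power_Suc)
  then show ?thesis
    using q_ge_2 by (auto simp: subfield_of_order_def power_0_left)
qed

lemma zero_in_subfield: "0 \<in> K"
  using prime_gt_0_nat[OF prime] by (simp add: subfield_of_order_def)

lemma card_subfield: "card K = q"
proof -
  have "q - 1 dvd CARD('f) - 1"
    unfolding card_minus_one by simp
  then have "card (K - {0}) = q - 1"
    unfolding subfield_nonzero by (rule card_roots_of_unity[OF primitive])
  then show ?thesis
    using zero_in_subfield q_ge_2 by (simp add: card_Diff_singleton)
qed

lemma subfield_diff_closed:
  assumes "x \<in> K" "y \<in> K"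
  shows "x - y \<in> K"
proof -
  have "x ^ q = (x - y) ^ q + y ^ q"
    using freshmans_dream'[where x = "x - y" and y = y and m = q and n = a] prime by (simp add: CHAR_field)
  then show ?thesis
    using assms by (simp add: subfield_of_order_def algebra_simps)
qed

lemma inj_on_G_conjugates: "inj_on (\<lambda>j. G ^ (q ^ j)) {..<b}"
proof (rule inj_on_frobenius_orbit[OF primitive])
  show "coprime (b * (q - 1)) q"
  proof (rule coprime_divisors)
    show "b * (q - 1) dvd p ^ (a * b) - 1"
      using primitive_u by (simp add: primitive_divisor_def)
    show "q dvd p ^ (a * b)"
      using b_pos by (simp add: le_imp_power_dvd)
    show "coprime (p ^ (a * b) - 1) (p ^ (a * b))"
      using prime by (intro coprime_diff_one_left_nat) (simp add: prime_gt_0_nat)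
  qed
  show "\<forall>h. 1 \<le> h \<and> h < b \<longrightarrow> \<not> b * (q - 1) dvd q ^ h - 1"
  proof (intro allI impI)
    fix h assume "1 \<le> h \<and> h < b"
    then have "1 \<le> a * h" "a * h < a * b"
      using a_pos by auto
    then have "\<not> b * (q - 1) dvd p ^ (a * h) - 1"
      using primitive_u unfolding primitive_divisor_def by blast
    then show "\<not> b * (q - 1) dvd q ^ h - 1"
      by (simp add: power_mult)
  qed
qed (use card_minus_one prime_gt_0_nat[OF prime] in auto)

lemma powers_G_independent:
  assumes "\<forall>i\<in>{1..b}. d i \<in> K" and "(\<Sum>i=1..b. d i * G ^ (i - 1)) = 0"
  shows "\<forall>i\<in>{1..b}. d i = 0"
proof -
  have "\<forall>i<b. d (Suc i) ^ q = d (Suc i)"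
    using assms(1) by (auto simp: subfield_of_order_def)
  moreover have "(\<Sum>i<b. d (Suc i) * G ^ i) = 0"
    using assms(2) by (simp add: sum.atLeast1_atMost_eq)
  ultimately have "\<forall>i<b. d (Suc i) = 0"
    using prime inj_on_G_conjugates
    by (intro powers_independent_over_frobenius_fixed[where s = a]) (auto simp: CHAR_field)
  show ?thesis
  proof
    fix i assume "i \<in> {1..b}"
    then obtain j where "i = Suc j" "j < b"
      by (cases i) auto
    with \<open>\<forall>i<b. d (Suc i) = 0\<close> show "d i = 0"
      by simp
  qed
qed

lemma kth_power_mem_basis_multiples:
  assumes "x \<noteq> 0"
  shows "x ^ k \<in> basis_multiples K (\<lambda>i. G ^ (i - 1)) b"
proof -
  obtain n where x: "x = \<omega> ^ n"
    using primitive assms by (auto simp: primitive_element_def)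
  define t where "t = \<omega> ^ (k * b * (n div b))"
  have "t ^ (q - 1) = 1"
    using primitive_element_power_eq_1_iff[OF primitive, of "k * b * (n div b) * (q - 1)"]
    unfolding card_minus_one t_def by (simp flip: power_mult)
  then have "t \<in> K - {0}"
    by (simp add: subfield_nonzero)
  moreover have "x ^ k = t * G ^ (Suc (n mod b) - 1)"
  proof -
    have "n * k = (b * (n div b) + n mod b) * k"
      by simp
    also have "\<dots> = k * b * (n div b) + k * (n mod b)"
      by (simp only: distrib_right mult_ac)
    finally have "n * k = k * b * (n div b) + k * (n mod b)" .
    then show ?thesis
      by (simp add: x t_def flip: power_mult power_add)
  qed
  moreover have "Suc (n mod b) \<in> {1..b}"
    using b_pos by (simp add: Suc_leI)
  ultimately show ?thesis
    unfolding basis_multiples_def by force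
qed

lemma basis_multiple_mem_kth_powers:
  assumes "t \<in> K - {0}"
  shows "t * G ^ (i - 1) \<in> (\<lambda>x. x ^ k) ` (UNIV - {0})"
proof -
  obtain n where n: "t = \<omega> ^ n"
    using primitive assms by (auto simp: primitive_element_def)
  with assms have "\<omega> ^ (n * (q - 1)) = 1"
    by (simp add: subfield_nonzero power_mult)
  then have "k * b * (q - 1) dvd n * (q - 1)"
    unfolding primitive_element_power_eq_1_iff[OF primitive] card_minus_one by (simp add: mult_ac)
  then obtain m where "n = k * b * m"
    using q_ge_2 by (auto elim: dvdE)
  then have "t * G ^ (i - 1) = (\<omega> ^ (b * m + (i - 1))) ^ k"
    by (simp add: n algebra_simps flip: power_mult power_add)
  moreover have "\<omega> ^ (b * m + (i - 1)) \<noteq> 0"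
    using primitive by (simp add: primitive_element_def)
  ultimately show ?thesis
    by blast
qed

lemma kth_powers_nonzero: "(\<lambda>x. x ^ k) ` (UNIV - {0}) = basis_multiples K (\<lambda>i. G ^ (i - 1)) b"
  using kth_power_mem_basis_multiples basis_multiple_mem_kth_powers
  by (auto simp: basis_multiples_def)

lemma sum_coordinates_eq:
  "(\<Sum>i<b. c i * \<omega> ^ (i * k)) = (\<Sum>i=1..b. c (i - 1) * G ^ (i - 1))"
proof -
  have "(\<Sum>i<b. c i * \<omega> ^ (i * k)) = (\<Sum>i<b. c i * G ^ i)"
    by (intro sum.cong refl) (simp add: mult.commute flip: power_mult)
  also have "\<dots> = (\<Sum>i=1..b. c (i - 1) * G ^ (i - 1))"
    by (simp add: sum.atLeast1_atMost_eq)
  finally show ?thesis .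
qed

lemma num_solutions_eq_sum_reps:
  "num_solutions r k \<alpha> = k ^ r * sum_reps (basis_multiples K (\<lambda>i. G ^ (i - 1)) b) r \<alpha>"
proof -
  have "num_solutions r k \<alpha> =
      card {xs. length xs = r \<and> set xs \<subseteq> UNIV - {0} \<and> sum_list (map (\<lambda>x. x ^ k) xs) = \<alpha>}"
    unfolding num_solutions_def by (intro arg_cong[where f = card] Collect_cong) auto
  also have "\<dots> = k ^ r * sum_reps ((\<lambda>x. x ^ k) ` (UNIV - {0})) r \<alpha>"
  proof (rule card_lists_sum_map_uniform_fibres)
    show "card {x \<in> UNIV - {0}. x ^ k = y} = k" if "y \<in> (\<lambda>x. x ^ k) ` (UNIV - {0})" for y :: 'f
      using that card_power_fibre[OF primitive, of k] card_minus_one by auto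
  qed simp
  finally show ?thesis
    by (simp only: kth_powers_nonzero)
qed

end

theorem proposition4p3:
  fixes p a b r :: nat and \<omega> \<alpha> :: "'f::{finite,field}" and c :: "nat \<Rightarrow> 'f"
  assumes "prime p" and "a > 0" and "b > 1"
    and "CARD('f) = p ^ (a * b)"
    and "b * (p ^ a - 1) dvd p ^ (a * b) - 1"
    and "primitive_divisor (b * (p ^ a - 1)) p (a * b)"
    and "primitive_element \<omega>"
    and "r \<ge> 1"
    and "\<forall>i<b. c i \<in> subfield_of_order (p ^ a)"
    and "\<alpha> = (\<Sum>i<b. c i * \<omega> ^ (i * ((p ^ (a * b) - 1) div (b * (p ^ a - 1)))))"
  shows "real (num_solutions r ((p ^ (a * b) - 1) div (b * (p ^ a - 1))) \<alpha>) =
    real ((p ^ (a * b) - 1) div (b * (p ^ a - 1))) ^ r *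
    (\<Sum>rs\<in>compositions b r. real (fact r) / (\<Prod>i=1..b. real (fact (rs i))) *
       (\<Prod>i=1..b. a_factor (p ^ a) (rs i) (c (i - 1) = 0)))"
proof -
  interpret primitive_divisor_field p a b \<omega>
    using assms by unfold_locales auto
  have coords: "\<forall>i\<in>{1..b}. c (i - 1) \<in> K"
    using assms(9) by auto
  have "real (num_solutions r k \<alpha>) =
      real k ^ r * real (sum_reps (basis_multiples K (\<lambda>i. G ^ (i - 1)) b) r \<alpha>)"
    unfolding num_solutions_eq_sum_reps by simp
  also have "real (sum_reps (basis_multiples K (\<lambda>i. G ^ (i - 1)) b) r \<alpha>) =
      (\<Sum>rs\<in>compositions b r. multinomial_coeff b r rs *
        (\<Prod>i=1..b. real (sum_reps (K - {0}) (rs i) (c (i - 1)))))"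
    unfolding assms(10) sum_coordinates_eq
    by (rule sum_reps_basis_multiples[OF _ zero_in_subfield subfield_diff_closed powers_G_independent coords])
      simp_all
  also have "\<dots> = (\<Sum>rs\<in>compositions b r. multinomial_coeff b r rs *
        (\<Prod>i=1..b. a_factor q (rs i) (c (i - 1) = 0)))"
    using coords q_ge_2 zero_in_subfield subfield_diff_closed
    by (intro sum.cong prod.cong arg_cong2[where f = "(*)"] refl)
      (simp add: sum_reps_nonzero_subgroup card_subfield)
  finally show ?thesis
    unfolding multinomial_coeff_def .
qed

end
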